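(* Let $Q\in\mathcal{H}[1,1]$ and $\alpha\geq 0$, $\beta>0$ be such that $$|Q(z)-1|<\operatorname{Re}(Q(z)-1)+\frac{1}{2(\sqrt{2}\beta+\alpha)}\qquad(z\in\mathbb{D}).$$ Suppose $p$ is analytic in $\mathbb{D}$ with $p(0)=1$. Then $$p(z)Q(z)+\frac{zp'(z)}{\beta p(z)+\alpha}\prec\sqrt{1+z}\quad\Longrightarrow\quad p(z)\prec\sqrt{1+z}.$$
   Context: $\mathbb{D}$ is the open unit disk. $\mathcal{H}[1,1]$ is the class of functions analytic in $\mathbb{D}$ of the form $1+a_1z+\cdots$. $\sqrt{1+z}$ is the principal branch (equal to $1$ at $0$). $f\prec F$ means $f=F\circ\omega$ for some analytic $\omega:\mathbb{D}\to\mathbb{D}$ with $\omega(0)=0$. *)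

theory Defs
  imports "HOL-Complex_Analysis.Complex_Analysis"
begin

definition subordinate :: "(complex \<Rightarrow> complex) \<Rightarrow> (complex \<Rightarrow> complex) \<Rightarrow> bool"
  (infix "\<prec>\<^sub>D" 50) where
  "f \<prec>\<^sub>D F \<longleftrightarrow> (\<exists>\<omega>. \<omega> holomorphic_on ball 0 1 \<and> \<omega> ` ball 0 1 \<subseteq> ball 0 1 \<and> \<omega> 0 = 0
      \<and> (\<forall>z\<in>ball 0 1. f z = F (\<omega> z)))"

definition H11 :: "(complex \<Rightarrow> complex) set" where
  "H11 = {Q. Q holomorphic_on ball 0 1 \<and> Q 0 = 1}"

end

theory Submission
  imports Defs
begin

(* Write p^2 = 1 + \<omega>. Since p(0) = 1, p is subordinate to csqrt (1 + z) as soon as |\<omega>| < 1 on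
   the disc, for then Re p stays positive by connectedness. If |\<omega>| reached 1, at a point z0 of
   least modulus where it does, Jack's lemma gives z0 \<omega>'(z0) = k \<omega>(z0) with k \<ge> 1, that is
   z0 p'(z0) = k (p^2 - 1) / (2 p) there. At such a point p^2 lies on the circle |w - 1| = 1, so
   Re (1 / p^2) = 1/2 and p lies in the disc |p - 1/sqrt 2| \<le> 1/sqrt 2, where
   Re (1 / (\<beta> p + \<alpha>)) \<ge> 1 / (sqrt 2 \<beta> + \<alpha>). Together with the bound on Q this forces
   \<psi> = p Q + z0 p' / (\<beta> p + \<alpha>) to satisfy Re (\<psi> / p^3) > 1/2, whereas every \<psi> in the
   lemniscate domain {|\<psi>^2 - 1| < 1, Re \<psi> > 0} has Re (\<psi> / p^3) < 1/2. So \<psi>(z0) escapes the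
   image of csqrt (1 + z), contradicting the hypothesis. *)

definition lemniscate_lobe :: "complex set" where
  "lemniscate_lobe = {w. 0 < Re w \<and> cmod (w\<^sup>2 - 1) < 1}"

lemma norm_square_minus_one_if_Re_eq_0:
  assumes "Re w = 0"
  shows "cmod (w\<^sup>2 - 1) = 1 + (cmod w)\<^sup>2"
proof -
  have "w\<^sup>2 - 1 = - of_real (1 + (Im w)\<^sup>2)"
    using assms by (simp add: complex_eq_iff power2_eq_square)
  then have "cmod (w\<^sup>2 - 1) = \<bar>1 + (Im w)\<^sup>2\<bar>"
    by (simp only: norm_minus_cancel norm_of_real)
  then show ?thesis
    using assms by (simp add: cmod_power2)
qed

lemma Re_nonzero_if_square_in_disc:
  assumes "cmod (w\<^sup>2 - 1) < 1"
  shows "Re w \<noteq> 0"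
  using assms norm_square_minus_one_if_Re_eq_0[of w] by force

lemma csqrt_one_plus_in_lemniscate_lobe:
  assumes "cmod z < 1"
  shows "csqrt (1 + z) \<in> lemniscate_lobe"
proof -
  have "cmod ((csqrt (1 + z))\<^sup>2 - 1) < 1"
    using assms by simp
  moreover from this have "Re (csqrt (1 + z)) \<noteq> 0"
    by (rule Re_nonzero_if_square_in_disc)
  ultimately show ?thesis
    using Re_csqrt[of "1 + z"] by (simp add: lemniscate_lobe_def)
qed

lemma connected_image_in_lemniscate_lobe:
  assumes f: "continuous_on S f" and S: "connected S"
    and disc: "\<And>z. z \<in> S \<Longrightarrow> cmod ((f z)\<^sup>2 - 1) < 1"
    and a: "a \<in> S" "f a \<in> lemniscate_lobe"
  shows "f ` S \<subseteq> lemniscate_lobe"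
proof (rule ccontr)
  assume "\<not> f ` S \<subseteq> lemniscate_lobe"
  then obtain b where b: "b \<in> S" "Re (f b) \<le> 0"
    using disc by (force simp: lemniscate_lobe_def)
  have "0 < Re (f a)"
    using a(2) by (simp add: lemniscate_lobe_def)
  moreover have "connected ((\<lambda>z. Re (f z)) ` S)"
    using f S by (intro connected_continuous_image continuous_intros)
  ultimately have "0 \<in> (\<lambda>z. Re (f z)) ` S"
    using a(1) b unfolding connected_iff_interval by (metis image_eqI less_eq_real_def)
  then show False
    using disc Re_nonzero_if_square_in_disc by fastforce
qed

lemma image_in_lemniscate_lobe_if_subordinate_csqrt:
  assumes "f \<prec>\<^sub>D (\<lambda>z. csqrt (1 + z))"
  shows "f ` ball 0 1 \<subseteq> lemniscate_lobe"
  using assms csqrt_one_plus_in_lemniscate_lobe unfolding subordinate_def by fastforce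

lemma subordinate_csqrt_if_image_in_lemniscate_lobe:
  assumes hol: "f holomorphic_on ball 0 1" and "f 0 = 1"
    and lobe: "f ` ball 0 1 \<subseteq> lemniscate_lobe"
  shows "f \<prec>\<^sub>D (\<lambda>z. csqrt (1 + z))"
  unfolding subordinate_def
proof (intro exI conjI)
  show "(\<lambda>z. (f z)\<^sup>2 - 1) holomorphic_on ball 0 1"
    using hol by (intro holomorphic_intros)
  show "(\<lambda>z. (f z)\<^sup>2 - 1) ` ball 0 1 \<subseteq> ball 0 1"
    using lobe by (auto simp: lemniscate_lobe_def dist_norm norm_minus_commute)
  show "(f 0)\<^sup>2 - 1 = 0"
    using \<open>f 0 = 1\<close> by simp
  show "\<forall>z\<in>ball 0 1. f z = csqrt (1 + ((f z)\<^sup>2 - 1))"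
    using lobe by (auto simp: lemniscate_lobe_def csqrt_square)
qed

lemma norm_minus_one_square: "(cmod (z - 1))\<^sup>2 = (cmod z)\<^sup>2 - 2 * Re z + 1"
  unfolding cmod_power2 by (simp add: power2_eq_square algebra_simps)

lemma norm_minus_one_less_1_iff: "cmod (z - 1) < 1 \<longleftrightarrow> (cmod z)\<^sup>2 < 2 * Re z"
  using abs_square_less_1[of "cmod (z - 1)"] by (simp add: norm_minus_one_square)

lemma norm_minus_one_eq_1_iff: "cmod (z - 1) = 1 \<longleftrightarrow> (cmod z)\<^sup>2 = 2 * Re z"
  using abs_square_eq_1[of "cmod (z - 1)"] by (simp add: norm_minus_one_square)

lemma Re_inverse_gt_half:
  assumes "cmod (z - 1) < 1"
  shows "1 / 2 < Re (1 / z)"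
proof -
  have lt: "(cmod z)\<^sup>2 < 2 * Re z"
    using assms by (simp add: norm_minus_one_less_1_iff)
  then have "z \<noteq> 0"
    by auto
  with lt show ?thesis
    by (simp add: Re_divide' field_simps)
qed

lemma Re_inverse_eq_half:
  assumes "cmod (z - 1) = 1" and "z \<noteq> 0"
  shows "Re (1 / z) = 1 / 2"
proof -
  have "(cmod z)\<^sup>2 = 2 * Re z"
    using assms(1) by (simp add: norm_minus_one_eq_1_iff)
  moreover have "0 < (cmod z)\<^sup>2"
    using assms(2) by simp
  ultimately show ?thesis
    by (simp add: Re_divide' field_simps)
qed

lemma abs_Im_le_Re_if_Re_square_nonneg:
  assumes "0 \<le> Re z" and "0 \<le> Re (z\<^sup>2)"
  shows "\<bar>Im z\<bar> \<le> Re z"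
proof (rule power2_le_imp_le)
  show "\<bar>Im z\<bar>\<^sup>2 \<le> (Re z)\<^sup>2"
    using assms(2) by (simp add: power2_eq_square)
qed (use assms in simp)

lemma abs_Im_less_Re_if_Re_square_pos:
  assumes "0 \<le> Re z" and "0 < Re (z\<^sup>2)"
  shows "\<bar>Im z\<bar> < Re z"
proof (rule power2_less_imp_less)
  show "\<bar>Im z\<bar>\<^sup>2 < (Re z)\<^sup>2"
    using assms(2) by (simp add: power2_eq_square)
qed (use assms in simp)

lemma Re_divide_pos_if_abs_Im_less_Re:
  assumes "\<bar>Im z\<bar> < Re z" and "\<bar>Im w\<bar> \<le> Re w" and "0 < Re w"
  shows "0 < Re (z / w)"
proof -
  have "- (Im z * Im w) \<le> \<bar>Im z\<bar> * Re w"
    using assms(2) by (metis abs_ge_minus_self abs_mult abs_ge_zero mult_left_mono order_trans)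
  also have "\<dots> < Re z * Re w"
    using assms(1,3) by simp
  finally show ?thesis
    by (simp add: Re_complex_div_gt_0 algebra_simps)
qed

(* Used with E = 1 / p^2 and w = \<psi> / p: a point \<psi> of the lobe has Re (\<psi> / p^3) < 1/2. *)
lemma Re_mult_lt_half_if_Re_divide_square_gt_half:
  fixes E w :: complex
  assumes E: "Re E = 1 / 2" and w: "0 < Re w" and gt: "1 / 2 < Re (E / w\<^sup>2)"
  shows "Re (w * E) < 1 / 2"
proof -
  define X Y S where "X = Re w" and "Y = Im w" and "S = Im E"
  have "w\<^sup>2 = Complex (X\<^sup>2 - Y\<^sup>2) (2 * X * Y)"
    by (simp add: X_def Y_def complex_eq_iff power2_eq_square)
  moreover have "(X\<^sup>2 - Y\<^sup>2)\<^sup>2 + (2 * X * Y)\<^sup>2 = (X\<^sup>2 + Y\<^sup>2)\<^sup>2"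
    by (simp add: power2_eq_square algebra_simps)
  ultimately have "Re (E / w\<^sup>2) = ((X\<^sup>2 - Y\<^sup>2) / 2 + 2 * S * X * Y) / (X\<^sup>2 + Y\<^sup>2)\<^sup>2"
    using E by (simp add: Re_divide S_def)
  moreover have "0 < (X\<^sup>2 + Y\<^sup>2)\<^sup>2"
    using w by (simp add: X_def add_pos_nonneg)
  ultimately have main: "(X\<^sup>2 + Y\<^sup>2)\<^sup>2 < X\<^sup>2 - Y\<^sup>2 + 4 * S * X * Y"
    using gt by (simp add: field_simps)
  have "X - 2 * S * Y < 1"
  proof (rule ccontr)
    assume "\<not> X - 2 * S * Y < 1"
    then have "2 * X * (2 * S * Y) \<le> 2 * X * (X - 1)"
      using w by (intro mult_left_mono) (auto simp: X_def)
    then have "X\<^sup>2 - Y\<^sup>2 + 4 * S * X * Y \<le> 3 * X\<^sup>2 - 2 * X - Y\<^sup>2"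
      by (simp add: algebra_simps power2_eq_square)
    moreover have "(X\<^sup>2 + Y\<^sup>2)\<^sup>2 - (3 * X\<^sup>2 - 2 * X - Y\<^sup>2)
        = X * (X - 1)\<^sup>2 * (X + 2) + Y\<^sup>2 * (1 + 2 * X\<^sup>2 + Y\<^sup>2)"
      by (simp add: algebra_simps power2_eq_square power4_eq_xxxx)
    moreover have "0 \<le> X * (X - 1)\<^sup>2 * (X + 2) + Y\<^sup>2 * (1 + 2 * X\<^sup>2 + Y\<^sup>2)"
      using w by (simp add: X_def)
    ultimately show False
      using main by linarith
  qed
  moreover have "Re (w * E) = X / 2 - S * Y"
    using E by (simp add: X_def Y_def S_def)
  ultimately show ?thesis
    by simp
qed

lemma norm_power2_le_sqrt2_mult_Re:
  assumes "cmod (p\<^sup>2 - 1) = 1" and "0 \<le> Re p"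
  shows "(cmod p)\<^sup>2 \<le> sqrt 2 * Re p"
proof (rule power2_le_imp_le)
  have "((cmod p)\<^sup>2)\<^sup>2 = 2 * Re (p\<^sup>2)"
    using assms(1) by (simp add: norm_minus_one_eq_1_iff norm_power power_mult[symmetric])
  also have "\<dots> = 2 * ((Re p)\<^sup>2 - (Im p)\<^sup>2)"
    by (simp add: power2_eq_square)
  also have "\<dots> \<le> (sqrt 2 * Re p)\<^sup>2"
    by (simp add: power_mult_distrib)
  finally show "((cmod p)\<^sup>2)\<^sup>2 \<le> (sqrt 2 * Re p)\<^sup>2" .
qed (use assms(2) in simp)

lemma abs_Im_le_Re_if_norm_square_minus_one_eq_1:
  assumes "cmod (p\<^sup>2 - 1) = 1" and "0 \<le> Re p"
  shows "\<bar>Im p\<bar> \<le> Re p"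
proof (rule abs_Im_le_Re_if_Re_square_nonneg)
  have "(cmod (p\<^sup>2))\<^sup>2 = 2 * Re (p\<^sup>2)"
    using assms(1) by (simp add: norm_minus_one_eq_1_iff)
  then show "0 \<le> Re (p\<^sup>2)"
    by (metis zero_le_power2 zero_le_mult_iff zero_less_numeral not_less)
qed (use assms(2) in simp)

lemma Re_inverse_affine_ge:
  fixes p :: complex and \<alpha> \<beta> :: real
  assumes p: "(cmod p)\<^sup>2 \<le> sqrt 2 * Re p" "0 < Re p" and \<alpha>: "0 \<le> \<alpha>" and \<beta>: "0 < \<beta>"
  shows "1 / (sqrt 2 * \<beta> + \<alpha>) \<le> Re (1 / (of_real \<beta> * p + of_real \<alpha>))"
proof -
  define W where "W = of_real \<beta> * p + of_real \<alpha>"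
  have ReW: "Re W = \<beta> * Re p + \<alpha>" and "0 < Re W"
    using p \<alpha> \<beta> by (simp_all add: W_def add_pos_nonneg)
  have "(Re p)\<^sup>2 \<le> (cmod p)\<^sup>2"
    by (simp add: cmod_power2)
  then have "Re p * Re p \<le> sqrt 2 * Re p"
    using p(1) by (simp add: power2_eq_square)
  then have "Re p \<le> sqrt 2"
    using p(2) by simp
  then have "\<alpha> * \<beta> * Re p \<le> \<alpha> * \<beta> * sqrt 2"
    using \<alpha> \<beta> by (intro mult_left_mono) simp_all
  moreover have "\<beta>\<^sup>2 * (cmod p)\<^sup>2 \<le> \<beta>\<^sup>2 * (sqrt 2 * Re p)"
    using p(1) by (intro mult_left_mono) simp_all
  moreover have "(cmod W)\<^sup>2 = \<beta>\<^sup>2 * (cmod p)\<^sup>2 + 2 * \<alpha> * \<beta> * Re p + \<alpha>\<^sup>2"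
    unfolding cmod_power2 by (simp add: W_def power2_eq_square algebra_simps)
  moreover have "(sqrt 2 * \<beta> + \<alpha>) * Re W
      = \<beta>\<^sup>2 * (sqrt 2 * Re p) + \<alpha> * \<beta> * Re p + \<alpha> * \<beta> * sqrt 2 + \<alpha>\<^sup>2"
    unfolding ReW by (simp add: power2_eq_square algebra_simps)
  ultimately have "(cmod W)\<^sup>2 \<le> (sqrt 2 * \<beta> + \<alpha>) * Re W"
    by linarith
  moreover have "0 < sqrt 2 * \<beta> + \<alpha>" and "0 < (cmod W)\<^sup>2"
    using \<open>0 < Re W\<close> \<alpha> \<beta> by (auto simp: add_pos_nonneg)
  ultimately have "Re W / ((sqrt 2 * \<beta> + \<alpha>) * Re W) \<le> Re W / (cmod W)\<^sup>2"
    using \<open>0 < Re W\<close> by (intro divide_left_mono mult_pos_pos) simp_all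
  then show ?thesis
    using \<open>0 < Re W\<close> by (simp add: W_def[symmetric] Re_divide')
qed

lemma cnj_mult_self_eq_1:
  assumes "cmod u = 1"
  shows "cnj u * u = 1"
  using assms by (metis complex_norm_square mult.commute of_real_1 one_power2)

lemma minus_one_mult_cnj_eq:
  assumes "cmod (w - 1) = 1"
  shows "(w - 1) * cnj w = w"
  using cnj_mult_self_eq_1[OF assms] by (simp add: algebra_simps)

lemma Re_mult_cnj_gt:
  assumes "cmod (w - 1) = 1" and "cmod (q - 1) < Re (q - 1) + c"
  shows "Re w - c < Re (q * cnj w)"
proof -
  have "q * cnj w = cnj w + (q - 1) + (q - 1) * cnj (w - 1)"
    by (simp add: algebra_simps)
  then have "Re (q * cnj w) = Re w + Re (q - 1) + Re ((q - 1) * cnj (w - 1))"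
    by (simp only: plus_complex.sel cnj.sel)
  moreover have "cmod ((q - 1) * cnj (w - 1)) = cmod (q - 1)"
    using assms(1) by (simp only: norm_mult complex_mod_cnj mult_1_right)
  ultimately show ?thesis
    using abs_Re_le_cmod[of "(q - 1) * cnj (w - 1)"] assms(2) by linarith
qed

lemma Re_divide_affine_ge:
  fixes p :: complex and k \<alpha> \<beta> :: real
  assumes "cmod (p\<^sup>2 - 1) = 1" and "0 < Re p" and "1 \<le> k" and "0 \<le> \<alpha>" and "0 < \<beta>"
  shows "1 / (2 * (sqrt 2 * \<beta> + \<alpha>)) \<le> Re (of_real k / (2 * (of_real \<beta> * p + of_real \<alpha>)))"
proof -
  define W where "W = of_real \<beta> * p + of_real \<alpha>"
  have "1 / (sqrt 2 * \<beta> + \<alpha>) \<le> Re (1 / W)"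
    unfolding W_def using norm_power2_le_sqrt2_mult_Re assms
    by (intro Re_inverse_affine_ge) simp_all
  moreover have "0 < 1 / (sqrt 2 * \<beta> + \<alpha>)"
    using assms by (simp add: add_pos_nonneg)
  ultimately have "0 \<le> Re (1 / W)"
    by linarith
  then have "1 * Re (1 / W) \<le> k * Re (1 / W)"
    using assms(3) by (intro mult_right_mono)
  with \<open>1 / (sqrt 2 * \<beta> + \<alpha>) \<le> Re (1 / W)\<close>
  have "1 / (2 * (sqrt 2 * \<beta> + \<alpha>)) \<le> k / 2 * Re (1 / W)"
    by (simp del: distrib_left_numeral)
  moreover have "of_real k / (2 * W) = of_real (k / 2) * (1 / W)"
    by simp
  ultimately show ?thesis
    unfolding W_def[symmetric]
    by (simp only: times_complex.sel Re_complex_of_real Im_complex_of_real mult_zero_left diff_zero)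
qed

lemma Re_divide_cube_gt_half:
  fixes p q :: complex and k \<alpha> \<beta> :: real
  assumes u: "cmod (p\<^sup>2 - 1) = 1" and p: "0 < Re p" and k: "1 \<le> k" and \<alpha>: "0 \<le> \<alpha>" and \<beta>: "0 < \<beta>"
    and q: "cmod (q - 1) < Re (q - 1) + 1 / (2 * (sqrt 2 * \<beta> + \<alpha>))"
  shows "1 / 2 < Re ((p * q + of_real k * (p\<^sup>2 - 1) / (2 * p * (of_real \<beta> * p + of_real \<alpha>))) / p ^ 3)"
proof -
  define W where "W = of_real \<beta> * p + of_real \<alpha>"
  define \<psi> where "\<psi> = p * q + of_real k * (p\<^sup>2 - 1) / (2 * p * W)"
  have "p \<noteq> 0"
    using p by auto
  have "0 < Re W"
    using p \<alpha> \<beta> by (simp add: W_def add_pos_nonneg)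
  then have "W \<noteq> 0"
    by auto
  have norm_p2: "(cmod (p\<^sup>2))\<^sup>2 = 2 * Re (p\<^sup>2)"
    using u by (simp add: norm_minus_one_eq_1_iff)
  then have "0 < Re (p\<^sup>2)"
    using \<open>p \<noteq> 0\<close> by (metis power_not_zero norm_eq_zero zero_less_power2 zero_less_mult_pos zero_less_numeral)
  have "\<psi> / p = q + of_real k * (p\<^sup>2 - 1) / (2 * p\<^sup>2 * W)"
    using \<open>p \<noteq> 0\<close> \<open>W \<noteq> 0\<close> by (simp add: \<psi>_def field_simps power2_eq_square)
  then have "\<psi> / p * cnj (p\<^sup>2) = q * cnj (p\<^sup>2) + of_real k * ((p\<^sup>2 - 1) * cnj (p\<^sup>2)) / (2 * p\<^sup>2 * W)"
    by (simp add: algebra_simps)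
  also have "\<dots> = q * cnj (p\<^sup>2) + of_real k / (2 * W)"
    unfolding minus_one_mult_cnj_eq[OF u] using \<open>p \<noteq> 0\<close> by simp
  finally have "Re (\<psi> / p * cnj (p\<^sup>2)) = Re (q * cnj (p\<^sup>2)) + Re (of_real k / (2 * W))"
    by simp
  then have "Re (p\<^sup>2) < Re (\<psi> / p * cnj (p\<^sup>2))"
    using Re_mult_cnj_gt[OF u q] Re_divide_affine_ge[OF u p k \<alpha> \<beta>] by (simp add: W_def)
  moreover have "\<psi> / p ^ 3 = \<psi> / p * cnj (p\<^sup>2) / of_real ((cmod (p\<^sup>2))\<^sup>2)"
    unfolding complex_norm_square using \<open>p \<noteq> 0\<close> by (simp add: field_simps power2_eq_square power3_eq_cube)
  then have "Re (\<psi> / p ^ 3) = Re (\<psi> / p * cnj (p\<^sup>2)) / (2 * Re (p\<^sup>2))"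
    by (simp only: Re_divide_of_real norm_p2)
  ultimately have "1 / 2 < Re (\<psi> / p ^ 3)"
    using \<open>0 < Re (p\<^sup>2)\<close> by (simp add: less_divide_eq)
  then show ?thesis
    by (simp only: \<psi>_def W_def)
qed

lemma boundary_value_not_in_lemniscate_lobe:
  fixes p q :: complex and k \<alpha> \<beta> :: real
  assumes u: "cmod (p\<^sup>2 - 1) = 1" and p: "0 < Re p" and k: "1 \<le> k" and \<alpha>: "0 \<le> \<alpha>" and \<beta>: "0 < \<beta>"
    and q: "cmod (q - 1) < Re (q - 1) + 1 / (2 * (sqrt 2 * \<beta> + \<alpha>))"
  shows "p * q + of_real k * (p\<^sup>2 - 1) / (2 * p * (of_real \<beta> * p + of_real \<alpha>)) \<notin> lemniscate_lobe"
proof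
  define \<psi> where "\<psi> = p * q + of_real k * (p\<^sup>2 - 1) / (2 * p * (of_real \<beta> * p + of_real \<alpha>))"
  assume "\<psi> \<in> lemniscate_lobe"
  then have \<psi>: "0 < Re \<psi>" "cmod (\<psi>\<^sup>2 - 1) < 1"
    by (simp_all add: lemniscate_lobe_def)
  have "p \<noteq> 0"
    using p by auto
  have "0 < Re (\<psi>\<^sup>2)"
    using \<psi>(2) norm_minus_one_less_1_iff[of "\<psi>\<^sup>2"] by (smt (verit) zero_le_power2)
  then have pos: "0 < Re (\<psi> / p)"
    using \<psi>(1) abs_Im_le_Re_if_norm_square_minus_one_eq_1[OF u] p
    by (intro Re_divide_pos_if_abs_Im_less_Re abs_Im_less_Re_if_Re_square_pos) simp_all
  have half: "Re (1 / p\<^sup>2) = 1 / 2"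
    using u \<open>p \<noteq> 0\<close> by (simp add: Re_inverse_eq_half)
  have gt: "1 / 2 < Re (1 / p\<^sup>2 / (\<psi> / p)\<^sup>2)"
    using Re_inverse_gt_half[OF \<psi>(2)] \<open>p \<noteq> 0\<close> by (simp add: power_divide)
  have "\<psi> / p ^ 3 = \<psi> / p * (1 / p\<^sup>2)"
    by (simp add: eval_nat_numeral)
  then have "Re (\<psi> / p ^ 3) < 1 / 2"
    using Re_mult_lt_half_if_Re_divide_square_gt_half[OF half pos gt] by (simp only:)
  then show False
    using Re_divide_cube_gt_half[OF u p k \<alpha> \<beta> q] by (simp add: \<psi>_def)
qed

lemma DERIV_nonneg_if_left_max:
  fixes f :: "real \<Rightarrow> real"
  assumes "(f has_real_derivative l) (at x)" and "a < x"
    and "\<And>t. a < t \<Longrightarrow> t < x \<Longrightarrow> f t \<le> f x"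
  shows "0 \<le> l"
proof (rule ccontr)
  assume "\<not> 0 \<le> l"
  then obtain d where "0 < d" and d: "\<And>h. 0 < h \<Longrightarrow> h < d \<Longrightarrow> f x < f (x - h)"
    using DERIV_neg_dec_left[OF assms(1)] by force
  define h where "h = min (d / 2) ((x - a) / 2)"
  have "0 < h" "h < d" "a < x - h"
    using \<open>0 < d\<close> \<open>a < x\<close> by (auto simp: h_def min_def field_simps)
  then show False
    using d[of h] assms(3)[of "x - h"] by force
qed

lemma Schwarz_Lemma_ball:
  assumes hol: "f holomorphic_on ball 0 r" and "f 0 = 0"
    and less: "\<And>z. cmod z < r \<Longrightarrow> cmod (f z) < 1" and z: "cmod z < r"
  shows "cmod (f z) \<le> cmod z / r"
proof -
  have "0 < r"
    using z by (meson norm_ge_zero le_less_trans)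
  define g where "g = (\<lambda>\<xi>. f (of_real r * \<xi>))"
  have "g holomorphic_on ball 0 1"
    unfolding g_def using \<open>0 < r\<close>
    by (intro holomorphic_on_compose_gen[OF _ hol, unfolded o_def] holomorphic_intros)
       (auto simp: norm_mult)
  moreover have "\<And>\<xi>. cmod \<xi> < 1 \<Longrightarrow> cmod (g \<xi>) < 1"
    using \<open>0 < r\<close> by (auto simp: g_def norm_mult intro!: less)
  moreover have "cmod (z / of_real r) < 1"
    using z \<open>0 < r\<close> by (simp add: norm_divide)
  ultimately have "cmod (g (z / of_real r)) \<le> cmod (z / of_real r)"
    using \<open>f 0 = 0\<close> by (intro Schwarz_Lemma(1)) (auto simp: g_def)
  then show ?thesis
    using \<open>0 < r\<close> by (simp add: g_def norm_divide)
qed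

lemma Re_radial_derivative_ge_1:
  fixes \<omega> :: "complex \<Rightarrow> complex"
  assumes hol: "\<omega> holomorphic_on ball 0 1" and "\<omega> 0 = 0" and z0: "z0 \<in> ball 0 1"
    and inside: "\<And>z. cmod z < cmod z0 \<Longrightarrow> cmod (\<omega> z) < 1" and "cmod (\<omega> z0) = 1"
    and der: "(\<omega> has_field_derivative d) (at z0)"
  shows "1 \<le> Re (cnj (\<omega> z0) * z0 * d)"
proof -
  define c where "c = cnj (\<omega> z0)"
  define r where "r = cmod z0"
  have "c * \<omega> z0 = 1"
    unfolding c_def using \<open>cmod (\<omega> z0) = 1\<close> by (rule cnj_mult_self_eq_1)
  have "0 < r" "r < 1"
    using z0 \<open>\<omega> 0 = 0\<close> \<open>cmod (\<omega> z0) = 1\<close> by (auto simp: r_def)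
  have "((\<lambda>t. \<omega> (z0 * t)) has_field_derivative d * z0) (at 1)"
    using DERIV_chain'[of "\<lambda>t. z0 * t" z0 1 UNIV \<omega> d] der
    by (auto intro!: derivative_eq_intros)
  then have "((\<lambda>t. c * \<omega> (z0 * t)) has_field_derivative c * z0 * d) (at (of_real 1))"
    by (auto intro!: derivative_eq_intros simp: ac_simps)
  then have "((\<lambda>t. Re (c * \<omega> (z0 * of_real t)) - t) has_real_derivative Re (c * z0 * d) - 1) (at 1)"
    by (intro DERIV_diff DERIV_ident has_field_derivative_Re has_vector_derivative_real_field)
  moreover have "Re (c * \<omega> (z0 * of_real t)) - t \<le> Re (c * \<omega> (z0 * of_real 1)) - 1"
    if "0 < t" "t < 1" for t
  proof -
    have "Re (c * \<omega> (z0 * of_real t)) \<le> cmod (\<omega> (z0 * of_real t))"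
      using complex_Re_le_cmod[of "c * \<omega> (z0 * of_real t)"] \<open>cmod (\<omega> z0) = 1\<close>
      by (simp add: c_def norm_mult)
    also have "\<dots> \<le> cmod (z0 * of_real t) / r"
      using that \<open>0 < r\<close> \<open>r < 1\<close> \<open>\<omega> 0 = 0\<close>
      by (intro Schwarz_Lemma_ball[OF holomorphic_on_subset[OF hol]] inside)
         (auto simp: r_def norm_mult)
    finally show ?thesis
      using that \<open>0 < r\<close> \<open>c * \<omega> z0 = 1\<close> by (simp add: r_def norm_mult)
  qed
  ultimately show ?thesis
    using DERIV_nonneg_if_left_max[of _ "Re (c * z0 * d) - 1" 1 0] by (force simp: c_def)
qed

lemma Im_tangential_derivative_eq_0:
  fixes \<omega> :: "complex \<Rightarrow> complex"
  assumes der: "(\<omega> has_field_derivative d) (at z0)" and "cmod (\<omega> z0) = 1"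
    and on_circle: "\<And>z. cmod z = cmod z0 \<Longrightarrow> cmod (\<omega> z) \<le> 1"
  shows "Im (cnj (\<omega> z0) * z0 * d) = 0"
proof -
  define c where "c = cnj (\<omega> z0)"
  have "c * \<omega> z0 = 1"
    unfolding c_def using \<open>cmod (\<omega> z0) = 1\<close> by (rule cnj_mult_self_eq_1)
  have "((\<lambda>s. z0 * exp (\<i> * s)) has_field_derivative z0 * \<i>) (at 0)"
    by (auto intro!: derivative_eq_intros)
  then have "((\<lambda>s. \<omega> (z0 * exp (\<i> * s))) has_field_derivative d * (z0 * \<i>)) (at 0)"
    using DERIV_chain'[of _ "z0 * \<i>" 0 UNIV \<omega> d] der by simp
  then have "((\<lambda>s. c * \<omega> (z0 * exp (\<i> * s))) has_field_derivative \<i> * (c * z0 * d)) (at (of_real 0))"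
    by (auto intro!: derivative_eq_intros simp: ac_simps)
  then have "((\<lambda>s. Re (c * \<omega> (z0 * exp (\<i> * of_real s)))) has_real_derivative Re (\<i> * (c * z0 * d))) (at 0)"
    by (intro has_field_derivative_Re has_vector_derivative_real_field)
  moreover have "Re (c * \<omega> (z0 * exp (\<i> * of_real s))) \<le> Re (c * \<omega> (z0 * exp (\<i> * of_real 0)))"
    for s :: real
    using complex_Re_le_cmod[of "c * \<omega> (z0 * exp (\<i> * of_real s))"] on_circle[of "z0 * exp (\<i> * of_real s)"]
      \<open>cmod (\<omega> z0) = 1\<close> \<open>c * \<omega> z0 = 1\<close>
    by (simp add: c_def norm_mult)
  ultimately have "Re (\<i> * (c * z0 * d)) = 0"
    by (intro DERIV_local_max[OF _ zero_less_one]) blast+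
  then show ?thesis
    by (simp add: c_def)
qed

lemma Jack_lemma:
  fixes \<omega> :: "complex \<Rightarrow> complex"
  assumes hol: "\<omega> holomorphic_on ball 0 1" and "\<omega> 0 = 0" and z0: "z0 \<in> ball 0 1"
    and inside: "\<And>z. cmod z < cmod z0 \<Longrightarrow> cmod (\<omega> z) < 1" and "cmod (\<omega> z0) = 1"
    and der: "(\<omega> has_field_derivative d) (at z0)"
  obtains k where "1 \<le> k" and "z0 * d = of_real k * \<omega> z0"
proof -
  define K where "K = cnj (\<omega> z0) * z0 * d"
  have "cball 0 (cmod z0) \<subseteq> ball 0 1"
    using z0 by auto
  have "z0 \<noteq> 0"
    using \<open>\<omega> 0 = 0\<close> \<open>cmod (\<omega> z0) = 1\<close> by auto
  have on_circle: "cmod (\<omega> z) \<le> 1" if "cmod z = cmod z0" for z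
  proof (rule continuous_le_on_closure[of "ball 0 (cmod z0)" "\<lambda>z. cmod (\<omega> z)"])
    show "continuous_on (closure (ball 0 (cmod z0))) (\<lambda>z. cmod (\<omega> z))"
      using \<open>z0 \<noteq> 0\<close> \<open>cball 0 (cmod z0) \<subseteq> ball 0 1\<close>
      by (auto intro!: continuous_intros continuous_on_subset[OF holomorphic_on_imp_continuous_on[OF hol]])
  qed (use that \<open>z0 \<noteq> 0\<close> in \<open>auto intro: less_imp_le inside\<close>)
  have "Im K = 0"
    unfolding K_def using der \<open>cmod (\<omega> z0) = 1\<close> on_circle by (rule Im_tangential_derivative_eq_0)
  then have "K = of_real (Re K)"
    by (simp add: complex_eq_iff)
  moreover have "z0 * d = K * \<omega> z0"
    using cnj_mult_self_eq_1[OF \<open>cmod (\<omega> z0) = 1\<close>] unfolding K_def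
    by (metis mult.assoc mult.commute mult_1_right)
  ultimately show ?thesis
    using that Re_radial_derivative_ge_1[OF assms] unfolding K_def by metis
qed

lemma first_unit_norm_point:
  fixes f :: "complex \<Rightarrow> 'a::real_normed_vector"
  assumes cont: "continuous_on (ball 0 1) f" and "norm (f 0) < 1"
    and z1: "z1 \<in> ball 0 1" "1 \<le> norm (f z1)"
  obtains z0 where "z0 \<in> ball 0 1" and "norm (f z0) = 1"
    and "\<And>z. cmod z < cmod z0 \<Longrightarrow> norm (f z) < 1"
proof -
  define S where "S = cball 0 (cmod z1) \<inter> f -` {w. 1 \<le> norm w}"
  have "cball 0 (cmod z1) \<subseteq> ball 0 1"
    using z1 by auto
  then have "closed S"
    unfolding S_def
    by (intro continuous_closed_preimage continuous_on_subset[OF cont] closed_cball)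
       (auto intro: closed_Collect_le continuous_intros)
  then have "compact S"
    by (simp add: S_def compact_eq_bounded_closed bounded_Int)
  moreover have "z1 \<in> S"
    using z1 by (simp add: S_def)
  ultimately obtain z0 where "z0 \<in> S" and min: "\<And>z. z \<in> S \<Longrightarrow> cmod z0 \<le> cmod z"
    using continuous_attains_inf[of S norm] by (auto intro: continuous_intros)
  then have z0: "z0 \<in> ball 0 1" "1 \<le> norm (f z0)"
    using z1(1) by (auto simp: S_def)
  have inside: "norm (f z) < 1" if "cmod z < cmod z0" for z
    using min[of z] that \<open>z0 \<in> S\<close> by (force simp: S_def)
  have "z0 \<noteq> 0"
    using z0(2) \<open>norm (f 0) < 1\<close> by auto
  have "norm (f z0) \<le> 1"
  proof (rule continuous_le_on_closure[of "ball 0 (cmod z0)" "\<lambda>z. norm (f z)"])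
    show "continuous_on (closure (ball 0 (cmod z0))) (\<lambda>z. norm (f z))"
      using \<open>z0 \<noteq> 0\<close> z0(1)
      by (auto intro!: continuous_intros continuous_on_subset[OF cont])
  qed (use \<open>z0 \<noteq> 0\<close> in \<open>auto intro: less_imp_le inside\<close>)
  then show ?thesis
    using that z0 inside by force
qed

lemma Re_pos_at_first_unit_point:
  fixes p :: "complex \<Rightarrow> complex"
  assumes cont: "continuous_on (ball 0 1) p" and "p 0 = 1" and z0: "z0 \<in> ball 0 1"
    and inside: "\<And>z. cmod z < cmod z0 \<Longrightarrow> cmod ((p z)\<^sup>2 - 1) < 1"
    and "cmod ((p z0)\<^sup>2 - 1) = 1" and "p z0 \<noteq> 0"
  shows "0 < Re (p z0)"
proof -
  have "z0 \<noteq> 0"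
    using \<open>cmod ((p z0)\<^sup>2 - 1) = 1\<close> \<open>p 0 = 1\<close> by auto
  have "p ` ball 0 (cmod z0) \<subseteq> lemniscate_lobe"
  proof (rule connected_image_in_lemniscate_lobe[where a = 0])
    show "continuous_on (ball 0 (cmod z0)) p"
      using z0 by (intro continuous_on_subset[OF cont]) auto
  qed (use \<open>z0 \<noteq> 0\<close> \<open>p 0 = 1\<close> inside in \<open>auto simp: lemniscate_lobe_def\<close>)
  have "0 \<le> Re (p z0)"
  proof (rule continuous_ge_on_closure[of "ball 0 (cmod z0)" "\<lambda>z. Re (p z)"])
    show "continuous_on (closure (ball 0 (cmod z0))) (\<lambda>z. Re (p z))"
      using \<open>z0 \<noteq> 0\<close> z0 by (auto intro!: continuous_intros continuous_on_subset[OF cont])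
    show "0 \<le> Re (p z)" if "z \<in> ball 0 (cmod z0)" for z
      using \<open>p ` ball 0 (cmod z0) \<subseteq> lemniscate_lobe\<close> that
      unfolding lemniscate_lobe_def by (force intro: less_imp_le)
  qed (use \<open>z0 \<noteq> 0\<close> in simp)
  moreover have "Re (p z0) \<noteq> 0"
    using norm_square_minus_one_if_Re_eq_0[of "p z0"] assms(5,6) by auto
  ultimately show ?thesis
    by simp
qed

lemma square_minus_one_in_unit_disc:
  fixes Q p :: "complex \<Rightarrow> complex" and \<alpha> \<beta> :: real
  assumes \<alpha>: "0 \<le> \<alpha>" and \<beta>: "0 < \<beta>"
    and Q: "\<And>z. z \<in> ball 0 1 \<Longrightarrow> cmod (Q z - 1) < Re (Q z - 1) + 1 / (2 * (sqrt 2 * \<beta> + \<alpha>))"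
    and hol: "p holomorphic_on ball 0 1" and "p 0 = 1"
    and lobe: "(\<lambda>z. p z * Q z + z * deriv p z / (of_real \<beta> * p z + of_real \<alpha>)) ` ball 0 1
      \<subseteq> lemniscate_lobe"
    and z: "z \<in> ball 0 1"
  shows "cmod ((p z)\<^sup>2 - 1) < 1"
proof (rule ccontr)
  assume "\<not> cmod ((p z)\<^sup>2 - 1) < 1"
  define \<omega> where "\<omega> z = (p z)\<^sup>2 - 1" for z
  have hol_\<omega>: "\<omega> holomorphic_on ball 0 1"
    unfolding \<omega>_def using hol by (intro holomorphic_intros)
  have "\<omega> 0 = 0"
    by (simp add: \<omega>_def \<open>p 0 = 1\<close>)
  have "1 \<le> cmod (\<omega> z)"
    using \<open>\<not> cmod ((p z)\<^sup>2 - 1) < 1\<close> by (simp add: \<omega>_def)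
  then obtain z0 where z0: "z0 \<in> ball 0 1" "cmod (\<omega> z0) = 1"
    and inside: "\<And>z. cmod z < cmod z0 \<Longrightarrow> cmod (\<omega> z) < 1"
    using first_unit_norm_point[OF holomorphic_on_imp_continuous_on[OF hol_\<omega>] _ z] \<open>\<omega> 0 = 0\<close>
    by auto
  have "(\<omega> has_field_derivative 2 * p z0 * deriv p z0) (at z0)"
    using holomorphic_derivI[OF hol open_ball z0(1)]
    unfolding \<omega>_def by (auto intro!: derivative_eq_intros)
  then obtain k where "1 \<le> k" and k: "z0 * (2 * p z0 * deriv p z0) = of_real k * \<omega> z0"
    using Jack_lemma[OF hol_\<omega> \<open>\<omega> 0 = 0\<close> z0(1) inside z0(2)] by blast
  have "p z0 \<noteq> 0"
    using k z0(2) \<open>1 \<le> k\<close> by auto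
  have "cmod ((p z0)\<^sup>2 - 1) = 1"
    using z0(2) by (simp add: \<omega>_def)
  have "0 < Re (p z0)"
  proof (rule Re_pos_at_first_unit_point[OF holomorphic_on_imp_continuous_on[OF hol] \<open>p 0 = 1\<close> z0(1)
        _ \<open>cmod ((p z0)\<^sup>2 - 1) = 1\<close> \<open>p z0 \<noteq> 0\<close>])
    show "cmod ((p z)\<^sup>2 - 1) < 1" if "cmod z < cmod z0" for z
      using inside[OF that] by (simp add: \<omega>_def)
  qed
  have "z0 * deriv p z0 = of_real k * ((p z0)\<^sup>2 - 1) / (2 * p z0)"
    using k \<open>p z0 \<noteq> 0\<close> by (simp add: \<omega>_def field_simps)
  then have \<psi>: "p z0 * Q z0 + z0 * deriv p z0 / (of_real \<beta> * p z0 + of_real \<alpha>)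
      = p z0 * Q z0 + of_real k * ((p z0)\<^sup>2 - 1) / (2 * p z0 * (of_real \<beta> * p z0 + of_real \<alpha>))"
    by simp
  from boundary_value_not_in_lemniscate_lobe[OF \<open>cmod ((p z0)\<^sup>2 - 1) = 1\<close> \<open>0 < Re (p z0)\<close>
      \<open>1 \<le> k\<close> \<alpha> \<beta> Q[OF z0(1)]]
  show False
    using lobe z0(1) unfolding \<psi>[symmetric] by blast
qed

theorem mainTheorem18:
  fixes Q p :: "complex \<Rightarrow> complex" and \<alpha> \<beta> :: real
  assumes "Q \<in> H11"
    and "\<alpha> \<ge> 0" and "\<beta> > 0"
    and "\<forall>z\<in>ball 0 1. cmod (Q z - 1) < Re (Q z - 1) + 1 / (2 * (sqrt 2 * \<beta> + \<alpha>))"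
    and "p holomorphic_on ball 0 1" and "p 0 = 1"
    and "\<forall>z\<in>ball 0 1. \<beta> * p z + \<alpha> \<noteq> 0"
    and "(\<lambda>z. p z * Q z + z * deriv p z / (\<beta> * p z + \<alpha>)) \<prec>\<^sub>D (\<lambda>z. csqrt (1 + z))"
  shows "p \<prec>\<^sub>D (\<lambda>z. csqrt (1 + z))"
proof -
  have "(\<lambda>z. p z * Q z + z * deriv p z / (\<beta> * p z + \<alpha>)) ` ball 0 1 \<subseteq> lemniscate_lobe"
    using assms(8) by (rule image_in_lemniscate_lobe_if_subordinate_csqrt)
  then have disc: "cmod ((p z)\<^sup>2 - 1) < 1" if "z \<in> ball 0 1" for z
    using square_minus_one_in_unit_disc[OF assms(2,3) _ assms(5,6) _ that] assms(4) by blast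
  have "p ` ball 0 1 \<subseteq> lemniscate_lobe"
    using holomorphic_on_imp_continuous_on[OF assms(5)] convex_connected[OF convex_ball] disc
    by (rule connected_image_in_lemniscate_lobe[where a = 0]) (simp_all add: assms(6) lemniscate_lobe_def)
  with assms(5,6) show ?thesis
    by (rule subordinate_csqrt_if_image_in_lemniscate_lobe)
qed

end
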